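(* Fix $m\ge 2$ and consider the game for SumLoss with top-1 feedback and binary relevance, as in the context. Let $\sigma_i,\sigma_j$ be two learner actions such that there is exactly one pair of objects $\{a,b\}$ whose positions differ in $\sigma_i$ and $\sigma_j$, with $a$ placed immediately before $b$ in $\sigma_i$ (i.e. $\sigma_i(b)=\sigma_i(a)+1$) and $b$ placed immediately before $a$ in $\sigma_j$ (i.e. $\sigma_j(a)=\sigma_j(b)+1$). Then $\sigma_i$ and $\sigma_j$ are neighboring actions.
   Context: Objects are $\{1,\dots,m\}$. Learner actions are the permutations $\sigma_1,\dots,\sigma_{m!}$ of $[m]$ ($\sigma(i)$ = rank of object $i$); adversary actions are the relevance vectors $r_1,\dots,r_{2^m}$ enumerating $\{0,1\}^m$. The loss matrix $L\in\mathbb{R}^{m!\times 2^m}$ has $L_{i,j}=\sum_{k=1}^m\sigma_i(k)r_j(k)$, with rows $\ell_i$. Let $\Delta=\{p\in\mathbb{R}^{2^m}:p_i\ge0,\sum_ip_i=1\}$ and $C_i=\{p\in\Delta:\ell_i\cdot p\le\ell_k\cdot p\ \forall k\}$. Action $i$ is Pareto-optimal if $C_i$ is non-empty and $(2^m-1)$-dimensional. Two Pareto-optimal actions $i,j$ are neighboring actions if $C_i\cap C_j$ is a $(2^m-2)$-dimensional polytope. *)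

theory Defs
  imports "HOL-Analysis.Analysis"
begin

text \<open>Objects are the elements of a finite type 'n (with m = CARD('n)).
  A learner action is a ranking sigma : 'n -> {1..m} that is a bijection
  (sigma k = rank of object k).  Adversary actions are relevance vectors
  r : 'n -> bool, i.e. elements of {0,1}^m; there are 2^m of them.
  Mixed adversary strategies are vectors p in real^('n => bool).\<close>

definition is_perm :: "('n::finite \<Rightarrow> nat) \<Rightarrow> bool" where
  "is_perm \<sigma> \<longleftrightarrow> bij_betw \<sigma> UNIV {1..CARD('n)}"

definition sumloss :: "('n::finite \<Rightarrow> nat) \<Rightarrow> ('n \<Rightarrow> bool) \<Rightarrow> real" where
  "sumloss \<sigma> r = (\<Sum>k\<in>UNIV. real (\<sigma> k) * (if r k then 1 else 0))"

definition exp_loss :: "('n::finite \<Rightarrow> nat) \<Rightarrow> real ^ ('n \<Rightarrow> bool) \<Rightarrow> real" where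
  "exp_loss \<sigma> p = (\<Sum>r\<in>UNIV. sumloss \<sigma> r * p $ r)"

definition prob_simplex :: "(real ^ ('n::finite \<Rightarrow> bool)) set" where
  "prob_simplex = {p. (\<forall>r. 0 \<le> p $ r) \<and> (\<Sum>r\<in>UNIV. p $ r) = 1}"

definition cell :: "('n::finite \<Rightarrow> nat) \<Rightarrow> (real ^ ('n \<Rightarrow> bool)) set" where
  "cell \<sigma> = {p \<in> prob_simplex. \<forall>\<tau>. is_perm \<tau> \<longrightarrow> exp_loss \<sigma> p \<le> exp_loss \<tau> p}"

definition pareto_optimal :: "('n::finite \<Rightarrow> nat) \<Rightarrow> bool" where
  "pareto_optimal \<sigma> \<longleftrightarrow> is_perm \<sigma> \<and> cell \<sigma> \<noteq> {} \<and>
     aff_dim (cell \<sigma>) = int CARD('n \<Rightarrow> bool) - 1"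

definition neighboring :: "('n::finite \<Rightarrow> nat) \<Rightarrow> ('n \<Rightarrow> nat) \<Rightarrow> bool" where
  "neighboring \<sigma> \<tau> \<longleftrightarrow> pareto_optimal \<sigma> \<and> pareto_optimal \<tau> \<and>
     polytope (cell \<sigma> \<inter> cell \<tau>) \<and>
     aff_dim (cell \<sigma> \<inter> cell \<tau>) = int CARD('n \<Rightarrow> bool) - 2"

end

theory Submission
  imports Defs
begin

text \<open>The expected loss of \<sigma> under p is \<Sum>k \<sigma>(k) q_k(p), where q_k(p) (below: marginal k p)
  is the probability that object k is relevant. By the rearrangement inequality \<sigma> is optimal
  wherever it ranks the objects by non-increasing q_k, and the losses of the two rankings differ by
  q_b - q_a. So both cells lie in the hyperplane of total mass 1, and their intersection lies in
  the further hyperplane q_a = q_b. Conversely each of these affine sets meets an open set of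
  positive strategies whose marginals are strictly ordered as the ranking prescribes (up to the
  tie q_a = q_b), and this open piece lies in the cell, resp. in both cells. Such strategies exist
  because the density r \<mapsto> 1 + \<Sum>{v j | r j} has q_k - q_l proportional to v k - v l.\<close>

lemma sum_UNIV_eq_two_points:
  fixes f :: "'a::finite \<Rightarrow> 'b::comm_monoid_add"
  assumes "k \<noteq> l" "\<And>j. j \<noteq> k \<Longrightarrow> j \<noteq> l \<Longrightarrow> f j = 0"
  shows "sum f UNIV = f k + f l"
  using sum.mono_neutral_right[of UNIV "{k, l}" f] assms by auto

lemma sum_le_sum_if_values_below_complement:
  fixes q :: "'a \<Rightarrow> real"
  assumes "finite A" "finite B" "card A = card B"
    and below: "\<And>x y. x \<in> A \<Longrightarrow> y \<notin> A \<Longrightarrow> q x \<le> q y"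
  shows "sum q A \<le> sum q B"
proof -
  have "card (A - B) = card (B - A)"
    using assms(1-3) card_Diff_subset_Int[of A B] card_Diff_subset_Int[of B A]
    by (simp add: Int_commute)
  then obtain h where h: "bij_betw h (A - B) (B - A)"
    using finite_same_card_bij[of "A - B" "B - A"] assms(1,2) by blast
  have "sum q (A - B) \<le> sum (q \<circ> h) (A - B)"
    using below bij_betw_apply[OF h] by (intro sum_mono) auto
  also have "\<dots> = sum q (B - A)"
    using sum.reindex_bij_betw[OF h] by simp
  finally show ?thesis
    using sum.Int_Diff[OF assms(1), of q B] sum.Int_Diff[OF assms(2), of q A]
    by (simp add: Int_commute)
qed

lemma aff_dim_eq_if_open_slice:
  fixes H :: "'a::euclidean_space set"
  assumes "convex H" "open U" "H \<inter> U \<noteq> {}" "H \<inter> U \<subseteq> S" "S \<subseteq> H"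
  shows "aff_dim S = aff_dim H"
  using aff_dim_convex_Int_open[OF assms(1-3)] aff_dim_subset[OF assms(4)] aff_dim_subset[OF assms(5)]
  by linarith

lemma rank_merge_mono:
  fixes \<sigma> :: "'a \<Rightarrow> nat"
  assumes "\<sigma> b = \<sigma> a + 1" "\<sigma> k < \<sigma> l"
  shows "\<sigma> (if k = b then a else k) \<le> \<sigma> (if l = b then a else l)"
  using assms by auto

definition marginal :: "'n::finite \<Rightarrow> real ^ ('n \<Rightarrow> bool) \<Rightarrow> real" where
  "marginal k p = (\<Sum>r\<in>UNIV. if r k then p $ r else 0)"

lemma marginal_eq_inner: "marginal k p = (\<chi> r. if r k then 1 else 0) \<bullet> p"
  unfolding marginal_def inner_vec_def by (rule sum.cong) auto

lemma exp_loss_eq_marginals: "exp_loss \<sigma> p = (\<Sum>k\<in>UNIV. real (\<sigma> k) * marginal k p)"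
proof -
  have "exp_loss \<sigma> p = (\<Sum>r\<in>UNIV. \<Sum>k\<in>UNIV. real (\<sigma> k) * (if r k then p $ r else 0))"
    unfolding exp_loss_def sumloss_def by (auto simp: sum_distrib_right intro!: sum.cong)
  also have "\<dots> = (\<Sum>k\<in>UNIV. real (\<sigma> k) * marginal k p)"
    unfolding marginal_def by (subst sum.swap) (simp add: sum_distrib_left)
  finally show ?thesis .
qed

lemma rank_weighted_sum_eq_layers:
  fixes q :: "'n::finite \<Rightarrow> real"
  assumes "is_perm \<sigma>"
  shows "(\<Sum>k\<in>UNIV. real (\<sigma> k) * q k) = (\<Sum>t\<in>{1..CARD('n)}. sum q {k. t \<le> \<sigma> k})"
proof -
  have "\<sigma> k \<le> CARD('n)" for k
    using assms unfolding is_perm_def bij_betw_def by auto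
  then have "{t \<in> {1..CARD('n)}. t \<le> \<sigma> k} = {1..\<sigma> k}" for k
    by (auto intro: order_trans)
  then have "(\<Sum>k\<in>UNIV. real (\<sigma> k) * q k)
      = (\<Sum>k\<in>UNIV. \<Sum>t\<in>{t \<in> {1..CARD('n)}. t \<le> \<sigma> k}. q k)"
    by simp
  also have "\<dots> = (\<Sum>t\<in>{1..CARD('n)}. \<Sum>k\<in>{k \<in> UNIV. t \<le> \<sigma> k}. q k)"
    by (rule sum.swap_restrict) simp_all
  finally show ?thesis by simp
qed

lemma card_rank_layer:
  assumes "is_perm (\<sigma> :: 'n::finite \<Rightarrow> nat)"
  shows "card {k. t \<le> \<sigma> k} = card {s \<in> {1..CARD('n)}. t \<le> s}"
proof -
  have bij: "bij_betw \<sigma> UNIV {1..CARD('n)}"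
    using assms unfolding is_perm_def .
  have "{s \<in> {1..CARD('n)}. t \<le> s} = \<sigma> ` {k. t \<le> \<sigma> k}"
    unfolding bij_betw_imp_surj_on[OF bij, symmetric] by auto
  then show ?thesis
    using card_image[OF inj_on_subset[OF bij_betw_imp_inj_on[OF bij] subset_UNIV]] by simp
qed

lemma rank_weighted_sum_le:
  fixes q :: "'n::finite \<Rightarrow> real"
  assumes "is_perm \<sigma>" "is_perm \<tau>" "\<And>k l. \<sigma> k < \<sigma> l \<Longrightarrow> q l \<le> q k"
  shows "(\<Sum>k\<in>UNIV. real (\<sigma> k) * q k) \<le> (\<Sum>k\<in>UNIV. real (\<tau> k) * q k)"
  unfolding rank_weighted_sum_eq_layers[OF assms(1)] rank_weighted_sum_eq_layers[OF assms(2)]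
proof (rule sum_mono)
  fix t
  show "sum q {k. t \<le> \<sigma> k} \<le> sum q {k. t \<le> \<tau> k}"
    using assms(3) card_rank_layer[OF assms(1)] card_rank_layer[OF assms(2)]
    by (intro sum_le_sum_if_values_below_complement) auto
qed

lemma mem_cell_if_marginals_antitone:
  assumes "p \<in> prob_simplex" "is_perm \<sigma>"
    and "\<And>k l. \<sigma> k < \<sigma> l \<Longrightarrow> marginal l p \<le> marginal k p"
  shows "p \<in> cell \<sigma>"
  using assms rank_weighted_sum_le[of \<sigma> _ "\<lambda>k. marginal k p"]
  unfolding cell_def exp_loss_eq_marginals by blast

lemma marginal_diff_eq_sum_transposed:
  fixes g :: "('n::finite \<Rightarrow> bool) \<Rightarrow> real"
  shows "marginal k (vec_lambda g) - marginal l (vec_lambda g)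
     = (\<Sum>r\<in>UNIV. if r k then g r - g (r \<circ> Transposition.transpose k l) else 0)"
proof -
  have "marginal l (vec_lambda g)
      = (\<Sum>r\<in>UNIV. if r k then g (r \<circ> Transposition.transpose k l) else 0)"
    unfolding marginal_def
    by (rule sum.reindex_bij_witness[where i="\<lambda>r. r \<circ> Transposition.transpose k l"
          and j="\<lambda>r. r \<circ> Transposition.transpose k l"]) (auto simp: comp_assoc)
  then show ?thesis
    unfolding marginal_def by (auto simp: sum_subtractf[symmetric] intro!: sum.cong)
qed

lemma marginal_diff_affine_density:
  fixes v :: "'n::finite \<Rightarrow> real"
  defines "g \<equiv> \<lambda>r. 1 + (\<Sum>j\<in>UNIV. if r j then v j else 0)"
  assumes "k \<noteq> l"
  shows "marginal k (vec_lambda g) - marginal l (vec_lambda g)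
     = real (card {r. r k \<and> \<not> r l}) * (v k - v l)"
proof -
  have "(if r k then g r - g (r \<circ> Transposition.transpose k l) else 0)
      = (if r k \<and> \<not> r l then v k - v l else 0)" for r
  proof (cases "r k = r l")
    case True
    then have "r \<circ> Transposition.transpose k l = r"
      by (auto simp: fun_eq_iff Transposition.transpose_def)
    with True show ?thesis by simp
  next
    case False
    have "g r - g (r \<circ> Transposition.transpose k l)
        = (if r k then v k else 0) + (if r l then v l else 0)
          - (if r l then v k else 0) - (if r k then v l else 0)"
      unfolding g_def using assms(2)
      by (simp add: sum_subtractf[symmetric] sum_UNIV_eq_two_points Transposition.transpose_def)
    then show ?thesis using False by auto
  qed
  then show ?thesis
    unfolding marginal_diff_eq_sum_transposed by (simp add: sum.If_cases)
qed

definition ordered_region :: "('n::finite \<Rightarrow> real) \<Rightarrow> (real ^ ('n \<Rightarrow> bool)) set" where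
  "ordered_region w =
     {p. (\<forall>r. 0 < p $ r) \<and> (\<forall>k l. w l < w k \<longrightarrow> marginal l p < marginal k p)}"

lemma open_ordered_region: "open (ordered_region w)"
proof -
  have "ordered_region w = (\<Inter>r. {p. 0 < p $ r}) \<inter>
      (\<Inter>(k, l) \<in> {(k, l). w l < w k}. {p. marginal l p < marginal k p})"
    unfolding ordered_region_def by auto
  then show ?thesis
    unfolding marginal_eq_inner
    by (auto intro!: open_Int open_INT open_halfspace_component_gt_cart open_Collect_less
        continuous_intros)
qed

lemma exists_point_marginals_ordered_as:
  fixes w :: "'n::finite \<Rightarrow> real"
  obtains p where "p \<in> prob_simplex" "p \<in> ordered_region w"
    "\<And>k l. w l = w k \<Longrightarrow> marginal l p = marginal k p"
proof -
  define v where "v = (\<lambda>j. w j - Min (range w))"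
  define g where "g = (\<lambda>r. 1 + (\<Sum>j\<in>UNIV. if r j then v j else 0 :: real))"
  define S where "S = sum g UNIV"
  define p where "p = inverse S *\<^sub>R vec_lambda g"
  have "0 \<le> v j" for j
    unfolding v_def by simp
  then have g_pos: "0 < g r" for r
    unfolding g_def by (simp add: add_pos_nonneg sum_nonneg)
  then have S_pos: "0 < S"
    unfolding S_def by (simp add: sum_pos)
  have p_pos: "0 < p $ r" for r
    unfolding p_def using g_pos S_pos by simp
  have "(\<Sum>r\<in>UNIV. p $ r) = 1"
    unfolding p_def using S_pos by (simp add: S_def sum_distrib_left[symmetric])
  then have simplex: "p \<in> prob_simplex"
    unfolding prob_simplex_def using p_pos less_imp_le by blast
  have diff: "marginal k p - marginal l p = (real (card {r. r k \<and> \<not> r l}) / S) * (w k - w l)"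
    if "k \<noteq> l" for k l
  proof -
    have "marginal k p - marginal l p = (marginal k (vec_lambda g) - marginal l (vec_lambda g)) / S"
      unfolding p_def marginal_eq_inner by (simp add: diff_divide_distrib field_simps)
    then show ?thesis
      unfolding g_def marginal_diff_affine_density[OF that] by (simp add: v_def)
  qed
  have card_pos: "0 < card {r. r k \<and> \<not> r l}" if "k \<noteq> l" for k l :: 'n
    using that by (subst card_gt_0_iff) (auto intro!: exI[of _ "\<lambda>j. j = k"])
  show thesis
  proof (rule that[OF simplex])
    show "p \<in> ordered_region w"
      unfolding ordered_region_def
    proof (intro CollectI conjI allI impI)
      show "0 < p $ r" for r by (rule p_pos)
      fix k l assume less: "w l < w k"
      then have "k \<noteq> l" by auto
      with less have "0 < (real (card {r. r k \<and> \<not> r l}) / S) * (w k - w l)"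
        using card_pos S_pos by simp
      then show "marginal l p < marginal k p"
        using diff[OF \<open>k \<noteq> l\<close>] by simp
    qed
    show "marginal l p = marginal k p" if "w l = w k" for k l
    proof (cases "k = l")
      case False
      with diff[OF False] that show ?thesis by simp
    qed simp
  qed
qed

definition mass_plane :: "(real ^ ('n::finite \<Rightarrow> bool)) set" where
  "mass_plane = {p. (\<Sum>r\<in>UNIV. p $ r) = 1}"

lemma mass_plane_eq_hyperplane: "mass_plane = {p. (\<chi> r. 1) \<bullet> p = 1}"
  unfolding mass_plane_def inner_vec_def by simp

lemma convex_mass_plane: "convex mass_plane"
  unfolding mass_plane_eq_hyperplane by (rule convex_hyperplane)

lemma aff_dim_mass_plane:
  "aff_dim (mass_plane :: (real ^ ('n::finite \<Rightarrow> bool)) set) = int CARD('n \<Rightarrow> bool) - 1"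
  unfolding mass_plane_eq_hyperplane by (subst aff_dim_hyperplane) (auto simp: vec_eq_iff)

lemma prob_simplex_eq: "prob_simplex = mass_plane \<inter> {p. \<forall>r. 0 \<le> p $ r}"
  unfolding prob_simplex_def mass_plane_def by auto

lemma cell_subset_mass_plane: "cell \<sigma> \<subseteq> mass_plane"
  unfolding cell_def prob_simplex_eq by blast

lemma mass_plane_Int_ordered_region_subset: "mass_plane \<inter> ordered_region w \<subseteq> prob_simplex"
  unfolding prob_simplex_eq ordered_region_def by (auto intro: less_imp_le)

lemma marginal_axis: "marginal k (axis r 1) = (if r k then 1 else 0)"
  by (simp add: marginal_eq_inner inner_axis)

lemma tie_eq_hyperplane:
  "{p. marginal a p = marginal b p}
    = {p. ((\<chi> r. if r a then 1 else 0) - (\<chi> r. if r b then 1 else 0)) \<bullet> p = (0::real)}"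
  unfolding marginal_eq_inner by (auto simp: inner_diff_left)

lemma aff_dim_mass_plane_Int_tie:
  fixes a b :: "'n::finite"
  assumes "a \<noteq> b"
  shows "aff_dim (mass_plane \<inter> {p. marginal a p = marginal b p}) = int CARD('n \<Rightarrow> bool) - 2"
proof -
  have mass_axis: "axis r 1 \<in> mass_plane" for r :: "'n \<Rightarrow> bool"
    unfolding mass_plane_def axis_def by simp
  have "axis (\<lambda>_. False) 1 \<in> mass_plane \<inter> {p. marginal a p = marginal b p}"
    using mass_axis by (simp add: marginal_axis)
  moreover have "axis (\<lambda>x. x = a) 1 \<in> mass_plane - {p. marginal a p = marginal b p}"
    using assms mass_axis by (simp add: marginal_axis)
  moreover have "affine (mass_plane :: (real ^ ('n \<Rightarrow> bool)) set)"
    unfolding mass_plane_eq_hyperplane by (rule affine_hyperplane)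
  ultimately have "aff_dim (mass_plane \<inter> {p. marginal a p = marginal b p})
      = aff_dim (mass_plane :: (real ^ ('n \<Rightarrow> bool)) set) - 1"
    unfolding tie_eq_hyperplane by (subst aff_dim_affine_Int_hyperplane) auto
  then show ?thesis
    unfolding aff_dim_mass_plane by simp
qed

lemma polyhedron_prob_simplex: "polyhedron (prob_simplex :: (real ^ ('n::finite \<Rightarrow> bool)) set)"
proof -
  have eq: "prob_simplex = mass_plane \<inter> (\<Inter>r. {p. axis r 1 \<bullet> p \<ge> (0::real)})"
    unfolding prob_simplex_eq by (auto simp: inner_axis')
  show ?thesis
    unfolding eq mass_plane_eq_hyperplane
    by (intro polyhedron_Int polyhedron_hyperplane polyhedron_Inter)
      (auto intro: polyhedron_halfspace_ge)
qed

lemma bounded_prob_simplex: "bounded (prob_simplex :: (real ^ ('n::finite \<Rightarrow> bool)) set)"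
proof -
  have "norm p \<le> 1" if "p \<in> prob_simplex" for p :: "real ^ ('n \<Rightarrow> bool)"
    using norm_le_l1_cart[of p] that unfolding prob_simplex_def by simp
  then show ?thesis
    unfolding bounded_iff by blast
qed

lemma polytope_cell: "polytope (cell (\<sigma> :: 'n::finite \<Rightarrow> nat))"
proof -
  have finite_perms: "finite {\<tau> :: 'n \<Rightarrow> nat. is_perm \<tau>}"
    by (rule finite_subset[of _ "PiE UNIV (\<lambda>_. {1..CARD('n)})"])
      (auto simp: is_perm_def bij_betw_def PiE_iff intro: finite_PiE)
  have "cell \<sigma> = prob_simplex \<inter>
      (\<Inter>\<tau> \<in> {\<tau>. is_perm \<tau>}. {p. (\<chi> r. sumloss \<sigma> r - sumloss \<tau> r) \<bullet> p \<le> 0})"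
    unfolding cell_def exp_loss_def inner_vec_def
    by (auto simp: sum_subtractf left_diff_distrib)
  then show ?thesis
    unfolding polytope_eq_bounded_polyhedron
    using bounded_subset[OF bounded_prob_simplex]
    by (auto intro!: polyhedron_Int polyhedron_prob_simplex polyhedron_Inter finite_imageI finite_perms
        polyhedron_halfspace_le)
qed

lemma pareto_optimal_if_perm:
  assumes "is_perm (\<sigma> :: 'n::finite \<Rightarrow> nat)"
  shows "pareto_optimal \<sigma>"
proof -
  define w where "w = (\<lambda>k. - real (\<sigma> k))"
  obtain p where "p \<in> prob_simplex" "p \<in> ordered_region w"
    using exists_point_marginals_ordered_as by metis
  then have nonempty: "mass_plane \<inter> ordered_region w \<noteq> {}"
    unfolding prob_simplex_eq by blast
  have slice: "mass_plane \<inter> ordered_region w \<subseteq> cell \<sigma>"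
  proof
    fix q assume q: "q \<in> mass_plane \<inter> ordered_region w"
    show "q \<in> cell \<sigma>"
    proof (rule mem_cell_if_marginals_antitone[OF _ assms])
      show "q \<in> prob_simplex"
        using q mass_plane_Int_ordered_region_subset by blast
      fix k l assume "\<sigma> k < \<sigma> l"
      then have "w l < w k" unfolding w_def by simp
      with q show "marginal l q \<le> marginal k q"
        unfolding ordered_region_def by (auto intro: less_imp_le)
    qed
  qed
  have "aff_dim (cell \<sigma>) = aff_dim (mass_plane :: (real ^ ('n \<Rightarrow> bool)) set)"
    using convex_mass_plane open_ordered_region nonempty slice cell_subset_mass_plane
    by (rule aff_dim_eq_if_open_slice)
  moreover have "cell \<sigma> \<noteq> {}"
    using nonempty slice by blast
  ultimately show ?thesis
    unfolding pareto_optimal_def aff_dim_mass_plane using assms by blast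
qed

lemma image_two_points_eq_if_perms_agree_elsewhere:
  assumes "is_perm (\<sigma> :: 'n::finite \<Rightarrow> nat)" "is_perm \<sigma>'"
    and "\<And>k. k \<noteq> a \<Longrightarrow> k \<noteq> b \<Longrightarrow> \<sigma>' k = \<sigma> k"
  shows "\<sigma>' ` {a, b} = \<sigma> ` {a, b}"
proof -
  have "inj \<sigma>" "inj \<sigma>'" "range \<sigma> = range \<sigma>'"
    using assms(1,2) unfolding is_perm_def bij_betw_def by auto
  moreover have "\<sigma>' ` (UNIV - {a, b}) = \<sigma> ` (UNIV - {a, b})"
    using assms(3) by (auto intro: image_cong)
  moreover have "{a, b} = UNIV - (UNIV - {a, b})" by blast
  ultimately show ?thesis
    by (metis image_set_diff)
qed

lemma exp_loss_diff_if_ranks_transposed: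
  assumes "a \<noteq> b" "\<sigma>' a = \<sigma> b" "\<sigma>' b = \<sigma> a" "\<And>k. k \<noteq> a \<Longrightarrow> k \<noteq> b \<Longrightarrow> \<sigma>' k = \<sigma> k"
  shows "exp_loss \<sigma> p - exp_loss \<sigma>' p
    = (real (\<sigma> b) - real (\<sigma> a)) * (marginal b p - marginal a p)"
proof -
  have "exp_loss \<sigma> p - exp_loss \<sigma>' p
      = (\<Sum>k\<in>UNIV. (real (\<sigma> k) - real (\<sigma>' k)) * marginal k p)"
    unfolding exp_loss_eq_marginals by (simp add: sum_subtractf left_diff_distrib)
  also have "\<dots> = (real (\<sigma> a) - real (\<sigma>' a)) * marginal a p + (real (\<sigma> b) - real (\<sigma>' b)) * marginal b p"
    using assms(1,4) by (intro sum_UNIV_eq_two_points) auto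
  finally show ?thesis
    using assms(2,3) by (simp add: algebra_simps)
qed

lemma aff_dim_cell_Int_cell_if_adjacent_transposed:
  fixes \<sigma> \<sigma>' :: "'n::finite \<Rightarrow> nat"
  assumes "is_perm \<sigma>" "is_perm \<sigma>'" "a \<noteq> b" "\<sigma> b = \<sigma> a + 1"
    and "\<sigma>' a = \<sigma> b" "\<sigma>' b = \<sigma> a" "\<And>k. k \<noteq> a \<Longrightarrow> k \<noteq> b \<Longrightarrow> \<sigma>' k = \<sigma> k"
  shows "aff_dim (cell \<sigma> \<inter> cell \<sigma>') = aff_dim (mass_plane \<inter> {p. marginal a p = marginal b p})"
proof -
  let ?T = "mass_plane \<inter> {p. marginal a p = marginal b p}"
  have upper: "cell \<sigma> \<inter> cell \<sigma>' \<subseteq> ?T"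
  proof
    fix p assume p: "p \<in> cell \<sigma> \<inter> cell \<sigma>'"
    then have "exp_loss \<sigma> p = exp_loss \<sigma>' p"
      using assms(1,2) unfolding cell_def by (auto intro: antisym)
    then have "marginal a p = marginal b p"
      using exp_loss_diff_if_ranks_transposed[OF assms(3,5-7), of p] assms(4) by simp
    with p show "p \<in> ?T"
      using cell_subset_mass_plane by blast
  qed
  \<comment> \<open>The ranks of \<sigma> with b moved onto a: both \<sigma> and \<sigma>' are compatible with this order.\<close>
  define w where "w = (\<lambda>k. - real (\<sigma> (if k = b then a else k)))"
  have w_tie: "k = l \<or> {k, l} = {a, b}" if "w l = w k" for k l
  proof -
    have "inj \<sigma>" using assms(1) unfolding is_perm_def bij_betw_def by blast
    with that have "(if k = b then a else k) = (if l = b then a else l)"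
      unfolding w_def by (auto dest: injD)
    then show ?thesis by (auto split: if_splits)
  qed
  have w_mono: "w l \<le> w k" if "\<sigma> k < \<sigma> l \<or> \<sigma>' k < \<sigma>' l" for k l
  proof -
    have "\<sigma>' (if k = a then b else k) = \<sigma> (if k = b then a else k)" for k
      using assms(5-7) by auto
    then show ?thesis
      using that rank_merge_mono[of \<sigma> b a k l] rank_merge_mono[of \<sigma>' a b k l] assms(4-6)
      unfolding w_def by auto
  qed
  have lower: "?T \<inter> ordered_region w \<subseteq> cell \<sigma> \<inter> cell \<sigma>'"
  proof
    fix p assume p: "p \<in> ?T \<inter> ordered_region w"
    then have simplex: "p \<in> prob_simplex"
      using mass_plane_Int_ordered_region_subset by blast
    have "marginal l p \<le> marginal k p" if "\<sigma> k < \<sigma> l \<or> \<sigma>' k < \<sigma>' l" for k l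
    proof (cases "w l = w k")
      case True
      from w_tie[OF True] p show ?thesis by (auto simp: doubleton_eq_iff)
    next
      case False
      with p w_mono[OF that] show ?thesis
        unfolding ordered_region_def by (auto intro: less_imp_le)
    qed
    then show "p \<in> cell \<sigma> \<inter> cell \<sigma>'"
      using mem_cell_if_marginals_antitone[OF simplex] assms(1,2) by blast
  qed
  obtain p where p: "p \<in> prob_simplex" "p \<in> ordered_region w"
    "\<And>k l. w l = w k \<Longrightarrow> marginal l p = marginal k p"
    using exists_point_marginals_ordered_as by blast
  have "w a = w b"
    unfolding w_def using assms(3) by simp
  then have nonempty: "?T \<inter> ordered_region w \<noteq> {}"
    using p unfolding prob_simplex_eq by auto
  have "convex ?T"
    unfolding tie_eq_hyperplane by (intro convex_Int convex_mass_plane convex_hyperplane)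
  show ?thesis
    using \<open>convex ?T\<close> open_ordered_region nonempty lower upper
    by (rule aff_dim_eq_if_open_slice)
qed

theorem lemma2:
  fixes \<sigma>i \<sigma>j :: "'n::finite \<Rightarrow> nat" and a b :: 'n
  assumes "CARD('n) \<ge> 2"
    and "is_perm \<sigma>i" and "is_perm \<sigma>j"
    and "a \<noteq> b"
    and "\<forall>k. k \<noteq> a \<and> k \<noteq> b \<longrightarrow> \<sigma>i k = \<sigma>j k"
    and "\<sigma>i b = \<sigma>i a + 1"
    and "\<sigma>j a = \<sigma>j b + 1"
  shows "neighboring \<sigma>i \<sigma>j"
proof -
  have agree: "\<And>k. k \<noteq> a \<Longrightarrow> k \<noteq> b \<Longrightarrow> \<sigma>j k = \<sigma>i k"
    using assms(5) by auto
  have "{\<sigma>j a, \<sigma>j b} = {\<sigma>i a, \<sigma>i b}"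
    using image_two_points_eq_if_perms_agree_elsewhere[OF assms(2,3) agree] by simp
  then have swapped: "\<sigma>j a = \<sigma>i b" "\<sigma>j b = \<sigma>i a"
    using assms(6,7) by (auto simp: doubleton_eq_iff)
  have "aff_dim (cell \<sigma>i \<inter> cell \<sigma>j) = int CARD('n \<Rightarrow> bool) - 2"
    using aff_dim_cell_Int_cell_if_adjacent_transposed[OF assms(2,3,4,6) swapped agree]
      aff_dim_mass_plane_Int_tie[OF assms(4)] by simp
  then show ?thesis
    unfolding neighboring_def
    using pareto_optimal_if_perm[OF assms(2)] pareto_optimal_if_perm[OF assms(3)]
      polytope_Int[OF polytope_cell polytope_cell] by blast
qed

end
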